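(* Let $N\ge 1$ and $\alpha\in\mathbb{C}$ with $|\alpha|=1$. The augmented Laplacian $L_\alpha(\mathcal{B}_N)=L(\mathcal{B}_N)+C_\alpha$ has a complete set of eigenvectors each of which is of one of the following forms: (i) $h$ is a Dirichlet eigenvector of $L(\mathcal{B}_N)$ (and its $L_\alpha(\mathcal{B}_N)$-eigenvalue equals its $L(\mathcal{B}_N)$-eigenvalue), or (ii) $h=\sum_{\kappa=0}^N c_\kappa(\alpha)h_{n,\kappa}$ for some coefficients $c_\kappa(\alpha)\in\mathbb{C}$. There are $N+1$ mutually orthogonal eigenvectors of $L_\alpha(\mathcal{B}_N)$ of the second type.
   Context: $L(\mathcal{B}_N)$ is the unnormalized Laplacian $(Lf)(v)=\sum_{w\sim v}[f(v)-f(w)]$ of the Boolean cube $\mathcal{B}_N$ (vertex set $\mathbb{Z}_2^N$, $v\sim w$ iff $v-w=e_i$ for a standard basis vector $e_i$). Write $\mathbf{0}=(0,\dots,0)$, $\mathbf{1}=(1,\dots,1)$. For $\alpha\ne0$, the corner operator $C_\alpha$ on vertex functions of $\mathcal{B}_N$ is defined by $(C_\alpha f)(\mathbf{0})=f(\mathbf{0})-f(\mathbf{1})/\alpha$, $(C_\alpha f)(\mathbf{1})=f(\mathbf{1})-\alpha f(\mathbf{0})$, and $(C_\alpha f)(v)=0$ for $v\notin\{\mathbf{0},\mathbf{1}\}$. A Dirichlet eigenvector of $L(\mathcal{B}_N)$ is an eigenvector vanishing at $\mathbf{0}$ and $\mathbf{1}$. For $\gamma\in\mathbb{Z}_2^N$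 let $|\gamma|$ be its number of coordinates equal to $1$ and $h_\gamma(v)=2^{-N/2}(-1)^{\langle v,\gamma\rangle}$; for $\kappa=0,\dots,N$, $h_{n,\kappa}=c_\kappa\sum_{|\gamma|=\kappa}h_\gamma$ with $c_\kappa>0$ chosen so that $\|h_{n,\kappa}\|=1$. *)

theory Defs
  imports Complex_Main
begin

text \<open>Vertices of the Boolean cube B_N: elements of Z_2^N, encoded as subsets of {..<N}
  (the support of the 0/1 vector).  Vertex functions are maps nat set => complex that
  vanish outside the vertex set.  0 = {} and 1 = {..<N}; adding e_i is symmetric difference
  with {i}; the pairing <v,gamma> mod 2 is card (v \<inter> gamma) mod 2; |gamma| = card gamma.\<close>

definition cube_vertices :: "nat \<Rightarrow> nat set set" where
  "cube_vertices N = Pow {..<N}"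

definition vfuns :: "nat \<Rightarrow> (nat set \<Rightarrow> complex) set" where
  "vfuns N = {f. \<forall>v. v \<notin> cube_vertices N \<longrightarrow> f v = 0}"

definition cube_laplacian :: "nat \<Rightarrow> (nat set \<Rightarrow> complex) \<Rightarrow> nat set \<Rightarrow> complex" where
  "cube_laplacian N f v =
     (if v \<in> cube_vertices N then (\<Sum>i<N. f v - f (v - {i} \<union> ({i} - v))) else 0)"

definition corner_op :: "nat \<Rightarrow> complex \<Rightarrow> (nat set \<Rightarrow> complex) \<Rightarrow> nat set \<Rightarrow> complex" where
  "corner_op N \<alpha> f v =
     (if v = {} then f {} - f {..<N} / \<alpha>
      else if v = {..<N} then f {..<N} - \<alpha> * f {}
      else 0)"

definition aug_laplacian :: "nat \<Rightarrow> complex \<Rightarrow> (nat set \<Rightarrow> complex) \<Rightarrow> nat set \<Rightarrow> complex" where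
  "aug_laplacian N \<alpha> f v = cube_laplacian N f v + corner_op N \<alpha> f v"

definition cinner :: "nat \<Rightarrow> (nat set \<Rightarrow> complex) \<Rightarrow> (nat set \<Rightarrow> complex) \<Rightarrow> complex" where
  "cinner N f g = (\<Sum>v\<in>cube_vertices N. f v * cnj (g v))"

definition vnorm :: "nat \<Rightarrow> (nat set \<Rightarrow> complex) \<Rightarrow> real" where
  "vnorm N f = sqrt (\<Sum>v\<in>cube_vertices N. (cmod (f v))\<^sup>2)"

definition hgamma :: "nat \<Rightarrow> nat set \<Rightarrow> nat set \<Rightarrow> complex" where
  "hgamma N \<gamma> v = (if v \<in> cube_vertices N
      then complex_of_real (2 powr (- real N / 2)) * (-1) ^ card (v \<inter> \<gamma>) else 0)"

definition hsum :: "nat \<Rightarrow> nat \<Rightarrow> nat set \<Rightarrow> complex" where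
  "hsum N k v = (\<Sum>\<gamma>\<in>{\<gamma>\<in>cube_vertices N. card \<gamma> = k}. hgamma N \<gamma> v)"

definition hnk :: "nat \<Rightarrow> nat \<Rightarrow> nat set \<Rightarrow> complex" where
  "hnk N k v = hsum N k v / complex_of_real (vnorm N (hsum N k))"

definition is_eigvec :: "nat \<Rightarrow> ((nat set \<Rightarrow> complex) \<Rightarrow> nat set \<Rightarrow> complex)
     \<Rightarrow> (nat set \<Rightarrow> complex) \<Rightarrow> complex \<Rightarrow> bool" where
  "is_eigvec N A h mu \<longleftrightarrow> h \<in> vfuns N \<and> h \<noteq> (\<lambda>_. 0) \<and> A h = (\<lambda>v. mu * h v)"

definition dirichlet_eigvec :: "nat \<Rightarrow> (nat set \<Rightarrow> complex) \<Rightarrow> complex \<Rightarrow> bool" where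
  "dirichlet_eigvec N h mu \<longleftrightarrow> is_eigvec N (cube_laplacian N) h mu \<and> h {} = 0 \<and> h {..<N} = 0"

definition lin_indep :: "nat \<Rightarrow> (nat set \<Rightarrow> complex) set \<Rightarrow> bool" where
  "lin_indep N B \<longleftrightarrow> (\<forall>c. (\<forall>v. (\<Sum>b\<in>B. c b * b v) = 0) \<longrightarrow> (\<forall>b\<in>B. c b = 0))"

definition spans :: "nat \<Rightarrow> (nat set \<Rightarrow> complex) set \<Rightarrow> bool" where
  "spans N B \<longleftrightarrow> (\<forall>f\<in>vfuns N. \<exists>c. f = (\<lambda>v. \<Sum>b\<in>B. c b * b v))"

end

theory Submission
  imports Defs "HOL-Library.Function_Algebras" "HOL-Computational_Algebra.Fundamental_Theorem_Algebra"
begin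

text \<open>For \<open>|\<alpha>| = 1\<close> the corner operator, and hence the augmented Laplacian
  \<open>L\<^sub>\<alpha> = L + C\<^sub>\<alpha>\<close>, is Hermitian. The character sums \<open>hsum N \<kappa>\<close> are
  eigenvectors of \<open>L\<close> with eigenvalue \<open>2\<kappa>\<close>, and by completeness of the characters the point
  masses at \<open>0\<close> and \<open>1\<close> are combinations of them. So \<open>C\<^sub>\<alpha>\<close> maps everything into their
  \<open>(N+1)\<close>-dimensional span \<open>H\<close>, which is therefore \<open>L\<^sub>\<alpha>\<close>-invariant; being Hermitian,
  \<open>L\<^sub>\<alpha>\<close> also preserves \<open>H\<^sup>\<bottom>\<close>, whose elements vanish at \<open>0\<close> and \<open>1\<close>, where \<open>L\<^sub>\<alpha>\<close>
  acts as \<open>L\<close>. Orthogonal eigenbases of \<open>L\<^sub>\<alpha>\<close> on \<open>H\<close> and on \<open>H\<^sup>\<bottom>\<close> together form the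
  required basis. The finite-dimensional spectral theorem behind this is proved for Hermitian
  operators on \<open>\<complex>\<^sup>V\<close>, with eigenvectors obtained by splitting a polynomial that
  annihilates a Krylov sequence \<open>y, T y, T\<^sup>2 y, \<dots>\<close> into linear factors.\<close>

section \<open>Finite-dimensional function spaces\<close>

interpretation fun_vs: vector_space "\<lambda>(c::complex) (f::'a \<Rightarrow> complex) v. c * f v"
  by unfold_locales (auto simp: fun_eq_iff algebra_simps)

lemma sum_fun_apply: "(\<Sum>b\<in>B. F b) v = (\<Sum>b\<in>B. F b v)"
  by (induction B rule: infinite_finite_induct) auto

lemma (in vector_space) family_dependent:
  assumes "finite D" "\<And>i. u i \<in> span D" "card D \<le> K"
  shows "\<exists>a. (\<exists>i\<le>K. a i \<noteq> 0) \<and> (\<Sum>i\<le>K. scale (a i) (u i)) = 0"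
proof (cases "inj_on u {..K}")
  case True
  have "\<not> independent (u ` {..K})"
    using independent_span_bound[OF assms(1)] assms(2,3) True by (fastforce simp: card_image)
  then obtain w where w: "\<exists>x\<in>u ` {..K}. w x \<noteq> 0" "(\<Sum>x\<in>u ` {..K}. scale (w x) x) = 0"
    using dependent_finite by blast
  then show ?thesis
    using True by (intro exI[of _ "w \<circ> u"]) (auto simp: sum.reindex)
next
  case False
  then obtain i j where ij: "i \<le> K" "j \<le> K" "i \<noteq> j" "u i = u j"
    by (auto simp: inj_on_def)
  define a where "a k = (if k = i then 1 else if k = j then -1 else (0::'a))" for k
  have "(\<Sum>k\<le>K. scale (a k) (u k))
      = (\<Sum>k\<le>K. (if k = i then u i else 0) + (if k = j then - u j else 0))"
    by (rule sum.cong) (use ij(3) in \<open>auto simp: a_def\<close>)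
  also have "\<dots> = 0"
    using ij(1,2,4) by (simp add: sum.distrib)
  finally have "(\<Sum>k\<le>K. scale (a k) (u k)) = 0" .
  then show ?thesis
    using ij by (intro exI[of _ a]) (auto simp: a_def)
qed

lemma in_span_finite_iff:
  "finite B \<Longrightarrow> f \<in> fun_vs.span B \<longleftrightarrow> (\<exists>c. f = (\<lambda>v. \<Sum>b\<in>B. c b * b v))"
  by (auto simp: fun_vs.span_finite fun_eq_iff sum_fun_apply)

definition supported_on :: "'a set \<Rightarrow> ('a \<Rightarrow> complex) set" where
  "supported_on V = {f. \<forall>v. v \<notin> V \<longrightarrow> f v = 0}"

definition fun_inner :: "'a set \<Rightarrow> ('a \<Rightarrow> complex) \<Rightarrow> ('a \<Rightarrow> complex) \<Rightarrow> complex" where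
  "fun_inner V f g = (\<Sum>v\<in>V. f v * cnj (g v))"

definition orthogonal_set :: "'a set \<Rightarrow> ('a \<Rightarrow> complex) set \<Rightarrow> bool" where
  "orthogonal_set V E \<longleftrightarrow> (\<forall>a\<in>E. \<forall>b\<in>E. a \<noteq> b \<longrightarrow> fun_inner V a b = 0)"

definition orthogonal_complement :: "'a set \<Rightarrow> ('a \<Rightarrow> complex) set \<Rightarrow> ('a \<Rightarrow> complex) set" where
  "orthogonal_complement V X = {f \<in> supported_on V. \<forall>x\<in>X. fun_inner V f x = 0}"

definition orthogonal_projection ::
    "'a set \<Rightarrow> ('a \<Rightarrow> complex) set \<Rightarrow> ('a \<Rightarrow> complex) \<Rightarrow> 'a \<Rightarrow> complex" where
  "orthogonal_projection V E f = (\<Sum>e\<in>E. (\<lambda>v. (fun_inner V f e / fun_inner V e e) * e v))"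

lemma supported_on_subspace: "fun_vs.subspace (supported_on V)"
  by (auto simp: fun_vs.subspace_def supported_on_def)

lemma supported_on_span_indicators:
  assumes "finite V"
  shows "supported_on V \<subseteq> fun_vs.span ((\<lambda>w v. if v = w then 1 else 0) ` V)"
proof
  fix f assume f: "f \<in> supported_on V"
  have "f = (\<Sum>w\<in>V. (\<lambda>v. f w * (if v = w then 1 else 0)))"
    using f assms by (auto simp: fun_eq_iff sum_fun_apply supported_on_def if_distrib cong: if_cong)
  also have "\<dots> \<in> fun_vs.span ((\<lambda>w v. if v = w then 1 else 0) ` V)"
    by (intro fun_vs.span_sum fun_vs.span_scale fun_vs.span_base) auto
  finally show "f \<in> fun_vs.span ((\<lambda>w v. if v = w then 1 else 0) ` V)" .
qed

lemma supported_on_family_dependent: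
  assumes "finite V" "\<And>i. u i \<in> supported_on V"
  shows "\<exists>a. (\<exists>i\<le>card V. a i \<noteq> 0) \<and> (\<Sum>i\<le>card V. (\<lambda>v. a i * u i v)) = 0"
  using assms supported_on_span_indicators
  by (intro fun_vs.family_dependent[of "(\<lambda>w v. if v = w then 1 else 0) ` V"])
    (auto intro: card_image_le)

lemma supported_on_independent_card_le:
  assumes "finite V" "fun_vs.independent E" "E \<subseteq> supported_on V"
  shows "card E \<le> card V"
proof -
  let ?D = "(\<lambda>w v. if v = w then 1 else 0 :: complex) ` V"
  have "E \<subseteq> fun_vs.span ?D"
    using supported_on_span_indicators[OF assms(1)] assms(3) by blast
  then have "card E \<le> card ?D"
    using fun_vs.independent_span_bound[of ?D E] assms(1,2) by simp
  also have "\<dots> \<le> card V"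
    using assms(1) by (rule card_image_le)
  finally show ?thesis .
qed

lemma fun_inner_commute: "fun_inner V g f = cnj (fun_inner V f g)"
  by (simp add: fun_inner_def mult.commute)

lemma fun_inner_add_left: "fun_inner V (f + g) h = fun_inner V f h + fun_inner V g h"
  by (simp add: fun_inner_def algebra_simps sum.distrib)

lemma fun_inner_add_right: "fun_inner V h (f + g) = fun_inner V h f + fun_inner V h g"
  by (simp add: fun_inner_def algebra_simps sum.distrib)

lemma fun_inner_diff_left: "fun_inner V (f - g) h = fun_inner V f h - fun_inner V g h"
  by (simp add: fun_inner_def algebra_simps sum_subtractf)

lemma fun_inner_scale_left: "fun_inner V (\<lambda>v. c * f v) g = c * fun_inner V f g"
  by (simp add: fun_inner_def sum_distrib_left mult.assoc)

lemma fun_inner_scale_right: "fun_inner V f (\<lambda>v. c * g v) = cnj c * fun_inner V f g"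
  by (simp add: fun_inner_def sum_distrib_left algebra_simps)

lemma fun_inner_sum_left: "fun_inner V (\<Sum>b\<in>B. F b) g = (\<Sum>b\<in>B. fun_inner V (F b) g)"
  by (simp add: fun_inner_def sum_fun_apply sum_distrib_right) (rule sum.swap)

lemma fun_inner_zero_left [simp]: "fun_inner V 0 g = 0"
  by (simp add: fun_inner_def)

lemma fun_inner_indicator_right:
  "finite V \<Longrightarrow> w \<in> V \<Longrightarrow> fun_inner V f (\<lambda>v. if v = w then 1 else 0) = f w"
  by (simp add: fun_inner_def if_distrib cong: if_cong)

lemma fun_inner_self_eq_0:
  assumes "finite V"
  shows "fun_inner V f f = 0 \<longleftrightarrow> (\<forall>v\<in>V. f v = 0)"
proof -
  have "fun_inner V f f = of_real (\<Sum>v\<in>V. (cmod (f v))\<^sup>2)"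
    by (simp add: fun_inner_def complex_norm_square del: of_real_power)
  then show ?thesis
    using assms by (simp add: sum_nonneg_eq_0_iff del: of_real_sum)
qed

lemma fun_inner_self_nonzero:
  "finite V \<Longrightarrow> f \<in> supported_on V \<Longrightarrow> f \<noteq> 0 \<Longrightarrow> fun_inner V f f \<noteq> 0"
  by (auto simp: fun_inner_self_eq_0 supported_on_def fun_eq_iff)

lemma orthogonal_complement_subspace: "fun_vs.subspace (orthogonal_complement V X)"
  using supported_on_subspace[of V]
  by (auto simp: fun_vs.subspace_def orthogonal_complement_def fun_inner_add_left fun_inner_scale_left)

lemma orthogonal_to_span:
  assumes "\<And>h. h \<in> S \<Longrightarrow> fun_inner V f h = 0" "x \<in> fun_vs.span S"
  shows "fun_inner V f x = 0"
proof -
  have "fun_vs.subspace {x. fun_inner V x f = 0}"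
    by (auto simp: fun_vs.subspace_def fun_inner_add_left fun_inner_scale_left)
  then have "fun_inner V x f = 0"
    using fun_vs.span_induct[OF assms(2)] assms(1) fun_inner_commute[of V f] by fastforce
  then show ?thesis
    by (subst fun_inner_commute) simp
qed

lemma orthogonal_set_Un:
  assumes "orthogonal_set V A" "orthogonal_set V B" "\<And>a b. a \<in> A \<Longrightarrow> b \<in> B \<Longrightarrow> fun_inner V b a = 0"
  shows "orthogonal_set V (A \<union> B)"
  using assms fun_inner_commute[of V] unfolding orthogonal_set_def by (metis Un_iff complex_cnj_zero)

lemma orthogonal_set_sum_inner:
  assumes "finite E" "orthogonal_set V E" "e \<in> E"
  shows "fun_inner V (\<Sum>b\<in>E. (\<lambda>v. u b * b v)) e = u e * fun_inner V e e"
proof -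
  have "fun_inner V (\<Sum>b\<in>E. (\<lambda>v. u b * b v)) e = (\<Sum>b\<in>E. u b * fun_inner V b e)"
    by (simp add: fun_inner_sum_left fun_inner_scale_left)
  also have "\<dots> = u e * fun_inner V e e"
    using assms by (subst sum.remove[of _ e]) (auto simp: orthogonal_set_def intro!: sum.neutral)
  finally show ?thesis .
qed

lemma orthogonal_set_independent:
  assumes "finite V" "finite E" "E \<subseteq> supported_on V" "orthogonal_set V E" "0 \<notin> E"
  shows "fun_vs.independent E"
proof -
  have "u e = 0" if "(\<Sum>b\<in>E. (\<lambda>v. u b * b v)) = 0" "e \<in> E" for u e
    using orthogonal_set_sum_inner[OF assms(2,4) \<open>e \<in> E\<close>, of u] that assms
      fun_inner_self_nonzero[of V e]
    by auto
  then show ?thesis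
    using assms(2) by (auto simp: fun_vs.dependent_finite)
qed

lemma orthogonal_projection_in_span: "orthogonal_projection V E f \<in> fun_vs.span E"
  unfolding orthogonal_projection_def
  by (intro fun_vs.span_sum fun_vs.span_scale fun_vs.span_base)

lemma orthogonal_projection_residual:
  assumes "finite V" "finite E" "E \<subseteq> supported_on V" "orthogonal_set V E" "0 \<notin> E" "e \<in> E"
  shows "fun_inner V (f - orthogonal_projection V E f) e = 0"
  unfolding orthogonal_projection_def fun_inner_diff_left orthogonal_set_sum_inner[OF assms(2,4,6)]
  using assms fun_inner_self_nonzero[of V e] by auto

lemma supported_on_subset_span_Un:
  assumes "finite V" "finite G" "G \<subseteq> supported_on V" "orthogonal_set V G" "0 \<notin> G"
    and "X \<subseteq> fun_vs.span G" "orthogonal_complement V X \<subseteq> fun_vs.span D"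
  shows "supported_on V \<subseteq> fun_vs.span (G \<union> D)"
proof
  fix f assume f: "f \<in> supported_on V"
  let ?p = "orthogonal_projection V G f"
  have "?p \<in> supported_on V"
    using fun_vs.span_minimal[OF assms(3) supported_on_subspace] orthogonal_projection_in_span by blast
  then have "f - ?p \<in> supported_on V"
    using fun_vs.subspace_diff[OF supported_on_subspace f] by blast
  moreover have "fun_inner V (f - ?p) x = 0" if "x \<in> X" for x
  proof (rule orthogonal_to_span[of G])
    show "fun_inner V (f - ?p) g = 0" if "g \<in> G" for g
      using assms(1-5) that by (rule orthogonal_projection_residual)
    show "x \<in> fun_vs.span G"
      using assms(6) \<open>x \<in> X\<close> by blast
  qed
  ultimately have "f - ?p \<in> fun_vs.span D"
    using assms(7) by (auto simp: orthogonal_complement_def)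
  then have "?p + (f - ?p) \<in> fun_vs.span (G \<union> D)"
    using fun_vs.span_mono[of G "G \<union> D"] fun_vs.span_mono[of D "G \<union> D"] orthogonal_projection_in_span
    by (blast intro: fun_vs.span_add)
  then show "f \<in> fun_vs.span (G \<union> D)"
    by simp
qed

section \<open>Spectral theorem for Hermitian operators\<close>

definition invariant_subspace ::
    "'a set \<Rightarrow> (('a \<Rightarrow> complex) \<Rightarrow> 'a \<Rightarrow> complex) \<Rightarrow> ('a \<Rightarrow> complex) set \<Rightarrow> bool" where
  "invariant_subspace V T X \<longleftrightarrow> fun_vs.subspace X \<and> X \<subseteq> supported_on V \<and> (\<forall>x\<in>X. T x \<in> X)"

definition orthogonal_eigenset :: "'a set \<Rightarrow> (('a \<Rightarrow> complex) \<Rightarrow> 'a \<Rightarrow> complex)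
    \<Rightarrow> ('a \<Rightarrow> complex) set \<Rightarrow> ('a \<Rightarrow> complex) set \<Rightarrow> bool" where
  "orthogonal_eigenset V T X E \<longleftrightarrow> finite E \<and> E \<subseteq> X \<and> orthogonal_set V E \<and> 0 \<notin> E
     \<and> (\<forall>e\<in>E. \<exists>\<mu>. T e = (\<lambda>v. \<mu> * e v))"

locale linear_operator =
  fixes V :: "'a set" and T :: "('a \<Rightarrow> complex) \<Rightarrow> 'a \<Rightarrow> complex"
  assumes finite_V: "finite V"
    and T_add: "T (f + g) = T f + T g"
    and T_scale: "T (\<lambda>v. c * f v) = (\<lambda>v. c * T f v)"
    and T_supported_on: "f \<in> supported_on V \<Longrightarrow> T f \<in> supported_on V"
begin

lemma T_zero: "T 0 = 0"
  using T_scale[of 0 0] by (simp add: zero_fun_def)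

lemma T_diff: "T (f - g) = T f - T g"
proof -
  have "T (f - g) = T (f + (\<lambda>v. (-1) * g v))"
    by (rule arg_cong[of _ _ T]) (simp add: fun_eq_iff)
  also have "\<dots> = T f + (\<lambda>v. (-1) * T g v)"
    by (simp only: T_add T_scale)
  finally show ?thesis
    by (simp add: fun_eq_iff)
qed

lemma funpow_T_diff: "(T ^^ i) (f - g) = (T ^^ i) f - (T ^^ i) g"
  by (induction i) (simp_all only: funpow.simps o_apply id_apply T_diff)

lemma funpow_T_scale: "(T ^^ i) (\<lambda>v. c * f v) = (\<lambda>v. c * (T ^^ i) f v)"
  by (induction i) (auto simp: T_scale)

lemma funpow_T_supported_on: "f \<in> supported_on V \<Longrightarrow> (T ^^ i) f \<in> supported_on V"
  by (induction i) (auto simp: T_supported_on)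

lemma invariant_subspace_span:
  assumes "S \<subseteq> supported_on V" "\<And>h. h \<in> S \<Longrightarrow> T h \<in> fun_vs.span S"
  shows "invariant_subspace V T (fun_vs.span S)"
proof -
  have "fun_vs.subspace {x. T x \<in> fun_vs.span S}"
    by (auto simp: fun_vs.subspace_def T_zero T_add T_scale
        intro: fun_vs.span_zero fun_vs.span_add fun_vs.span_scale)
  then have "T x \<in> fun_vs.span S" if "x \<in> fun_vs.span S" for x
    using fun_vs.span_induct[OF that] assms(2) by blast
  then show ?thesis
    using fun_vs.span_minimal[OF assms(1) supported_on_subspace]
    by (auto simp: invariant_subspace_def)
qed

text \<open>\<open>poly_apply K p y\<close> is \<open>p(T) y\<close> for \<open>degree p \<le> K\<close>; the fixed bound \<open>K\<close> lets a
  polynomial and its factors be evaluated by sums over the same range.\<close>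
definition poly_apply :: "nat \<Rightarrow> complex poly \<Rightarrow> ('a \<Rightarrow> complex) \<Rightarrow> 'a \<Rightarrow> complex" where
  "poly_apply K p y = (\<Sum>i\<le>K. (\<lambda>v. coeff p i * (T ^^ i) y v))"

lemma poly_apply_linear_factor:
  assumes "degree q < K"
  shows "poly_apply K ([:-z, 1:] * q) y = poly_apply K q (T y - (\<lambda>v. z * y v))"
proof
  fix v
  obtain K' where K: "K = Suc K'"
    using assms by (cases K) auto
  have "(\<Sum>i\<le>K. coeff (pCons 0 q) i * (T ^^ i) y v) = (\<Sum>i\<le>K'. coeff q i * (T ^^ i) (T y) v)"
    unfolding K sum.atMost_Suc_shift by (simp add: funpow_Suc_right del: funpow.simps)
  also have "\<dots> = (\<Sum>i\<le>K. coeff q i * (T ^^ i) (T y) v)"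
    using assms K by (simp add: coeff_eq_0)
  finally show "poly_apply K ([:-z, 1:] * q) y v = poly_apply K q (T y - (\<lambda>v. z * y v)) v"
    by (simp add: poly_apply_def sum_fun_apply funpow_T_diff funpow_T_scale algebra_simps
        sum_subtractf sum_distrib_left sum.distrib)
qed

lemma poly_apply_const:
  assumes "degree p = 0"
  shows "poly_apply K p y = (\<lambda>v. coeff p 0 * y v)"
proof -
  have "coeff p i = 0" if "i \<noteq> 0" for i
    using assms that by (simp add: coeff_eq_0)
  then show ?thesis
    by (simp add: poly_apply_def sum_fun_apply fun_eq_iff atMost_atLeast0 sum.atLeast_Suc_atMost
        del: sum.atMost_Suc)
qed

lemma eigenvector_if_annihilated:
  assumes U: "invariant_subspace V T U"
  shows "degree p \<le> K \<Longrightarrow> p \<noteq> 0 \<Longrightarrow> y \<in> U \<Longrightarrow> y \<noteq> 0 \<Longrightarrow> poly_apply K p y = 0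
    \<Longrightarrow> \<exists>z\<in>U. z \<noteq> 0 \<and> (\<exists>\<mu>. T z = (\<lambda>v. \<mu> * z v))"
proof (induction "degree p" arbitrary: p y rule: less_induct)
  case less
  show ?case
  proof (cases "degree p = 0")
    case True
    then have "coeff p 0 \<noteq> 0"
      using less.prems(2) leading_coeff_0_iff by fastforce
    then have "y = 0"
      using less.prems(5) poly_apply_const[OF True] by (auto simp: fun_eq_iff)
    with less.prems(4) show ?thesis by blast
  next
    case False
    then obtain z where "poly p z = 0"
      using fundamental_theorem_of_algebra[of p] by (auto simp: constant_degree)
    then obtain q where p: "p = [:-z, 1:] * q"
      by (auto simp: poly_eq_0_iff_dvd elim: dvdE)
    with less.prems(2) have "q \<noteq> 0" by auto
    then have degree_p: "degree p = Suc (degree q)"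
      unfolding p by (subst degree_mult_eq) auto
    define y' where "y' = T y - (\<lambda>v. z * y v)"
    show ?thesis
    proof (cases "y' = 0")
      case True
      then show ?thesis
        using less.prems(3,4) by (intro bexI[of _ y]) (auto simp: y'_def fun_eq_iff)
    next
      case False
      have "y' \<in> U"
        using U less.prems(3) unfolding y'_def invariant_subspace_def
        by (intro fun_vs.subspace_diff fun_vs.subspace_scale) auto
      moreover have "poly_apply K q y' = 0"
        using less.prems(1,5) poly_apply_linear_factor[of q K z y] degree_p by (simp add: p y'_def)
      ultimately show ?thesis
        using less.hyps[of q y'] less.prems(1) degree_p \<open>q \<noteq> 0\<close> False by simp
    qed
  qed
qed

lemma eigenvector_exists:
  assumes U: "invariant_subspace V T U" and y: "y \<in> U" "y \<noteq> 0"
  shows "\<exists>z\<in>U. z \<noteq> 0 \<and> (\<exists>\<mu>. T z = (\<lambda>v. \<mu> * z v))"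
proof -
  have "(T ^^ i) y \<in> supported_on V" for i
    using U y(1) by (intro funpow_T_supported_on) (auto simp: invariant_subspace_def)
  then obtain a where a: "\<exists>i\<le>card V. a i \<noteq> 0" "(\<Sum>i\<le>card V. (\<lambda>v. a i * (T ^^ i) y v)) = 0"
    using supported_on_family_dependent[OF finite_V, of "\<lambda>i. (T ^^ i) y"] by blast
  define p where "p = (\<Sum>i\<le>card V. monom (a i) i)"
  have coeff_p: "coeff p i = (if i \<le> card V then a i else 0)" for i
    by (simp add: p_def coeff_sum coeff_monom)
  have "p \<noteq> 0"
    using a(1) coeff_p by (metis coeff_0)
  moreover have "degree p \<le> card V"
    by (rule degree_le) (simp add: coeff_p)
  moreover have "poly_apply (card V) p y = 0"
    using a(2) by (simp add: poly_apply_def coeff_p)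
  ultimately show ?thesis
    using eigenvector_if_annihilated[OF U] y by blast
qed

end

locale hermitian_operator = linear_operator +
  assumes T_hermitian: "fun_inner V (T f) g = fun_inner V f (T g)"
begin

lemma orthogonal_complement_invariant:
  assumes X: "invariant_subspace V T X"
  shows "invariant_subspace V T (orthogonal_complement V X)"
proof -
  have "T f \<in> orthogonal_complement V X" if f: "f \<in> orthogonal_complement V X" for f
  proof -
    have "fun_inner V (T f) x = 0" if "x \<in> X" for x
      using f X that by (simp add: T_hermitian orthogonal_complement_def invariant_subspace_def)
    then show ?thesis
      using f T_supported_on by (simp add: orthogonal_complement_def)
  qed
  then show ?thesis
    using orthogonal_complement_subspace by (auto simp: invariant_subspace_def orthogonal_complement_def)
qed

lemma invariant_Int_orthogonal_complement_eigenvectors: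
  assumes X: "invariant_subspace V T X" and eig: "\<And>e. e \<in> E \<Longrightarrow> \<exists>\<mu>. T e = (\<lambda>v. \<mu> * e v)"
  shows "invariant_subspace V T (X \<inter> orthogonal_complement V E)"
  unfolding invariant_subspace_def
proof (intro conjI ballI)
  show "fun_vs.subspace (X \<inter> orthogonal_complement V E)"
    using X orthogonal_complement_subspace unfolding invariant_subspace_def
    by (blast intro: fun_vs.subspace_inter)
  show "X \<inter> orthogonal_complement V E \<subseteq> supported_on V"
    by (auto simp: orthogonal_complement_def)
  fix u assume u: "u \<in> X \<inter> orthogonal_complement V E"
  have "fun_inner V (T u) e = 0" if "e \<in> E" for e
    using eig[OF that] u that by (auto simp: T_hermitian fun_inner_scale_right orthogonal_complement_def)
  then show "T u \<in> X \<inter> orthogonal_complement V E"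
    using u X T_supported_on by (auto simp: orthogonal_complement_def invariant_subspace_def)
qed

lemma orthogonal_eigenset_insert:
  assumes X: "invariant_subspace V T X" and E: "orthogonal_eigenset V T X E"
    and x: "x \<in> X" "x \<notin> fun_vs.span E"
  shows "\<exists>z. z \<notin> E \<and> orthogonal_eigenset V T X (insert z E)"
proof -
  have fin: "finite E" and EX: "E \<subseteq> X" and orth: "orthogonal_set V E" and nz: "0 \<notin> E"
    and eig: "\<And>e. e \<in> E \<Longrightarrow> \<exists>\<mu>. T e = (\<lambda>v. \<mu> * e v)"
    using E by (auto simp: orthogonal_eigenset_def)
  have EV: "E \<subseteq> supported_on V"
    using EX X by (auto simp: invariant_subspace_def)
  define U where "U = X \<inter> orthogonal_complement V E"
  have "invariant_subspace V T U"
    unfolding U_def using X eig by (rule invariant_Int_orthogonal_complement_eigenvectors)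
  moreover
  define y where "y = x - orthogonal_projection V E x"
  have "y \<in> U"
  proof -
    have "orthogonal_projection V E x \<in> X"
      using fun_vs.span_minimal[OF EX] X orthogonal_projection_in_span
      by (auto simp: invariant_subspace_def)
    then have "y \<in> X"
      using X x(1) by (auto simp: y_def invariant_subspace_def intro: fun_vs.subspace_diff)
    then show ?thesis
      using X orthogonal_projection_residual[OF finite_V fin EV orth nz]
      by (auto simp: U_def y_def orthogonal_complement_def invariant_subspace_def)
  qed
  moreover have "y \<noteq> 0"
    using x(2) orthogonal_projection_in_span[of V E x] by (auto simp: y_def)
  ultimately obtain z where z: "z \<in> U" "z \<noteq> 0" "\<exists>\<mu>. T z = (\<lambda>v. \<mu> * z v)"
    using eigenvector_exists by blast
  have "z \<in> supported_on V"
    using z(1) by (auto simp: U_def orthogonal_complement_def)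
  then have "z \<notin> E"
    using z(1,2) fun_inner_self_nonzero[OF finite_V] by (auto simp: U_def orthogonal_complement_def)
  moreover have "orthogonal_set V (E \<union> {z})"
    using z(1) orth by (intro orthogonal_set_Un) (auto simp: orthogonal_set_def U_def orthogonal_complement_def)
  ultimately show ?thesis
    using E z by (intro exI[of _ z]) (auto simp: orthogonal_eigenset_def U_def)
qed

lemma orthogonal_eigenbasis_exists:
  assumes X: "invariant_subspace V T X"
  shows "\<exists>E. orthogonal_eigenset V T X E \<and> X \<subseteq> fun_vs.span E"
proof -
  have "card E < Suc (card V)" if "orthogonal_eigenset V T X E" for E
    using that X supported_on_independent_card_le[OF finite_V] orthogonal_set_independent[OF finite_V]
    by (force simp: orthogonal_eigenset_def invariant_subspace_def)
  moreover have "orthogonal_eigenset V T X {}"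
    by (simp add: orthogonal_eigenset_def orthogonal_set_def)
  ultimately obtain E where E: "orthogonal_eigenset V T X E"
    and max: "\<And>E'. orthogonal_eigenset V T X E' \<Longrightarrow> card E' \<le> card E"
    using ex_has_greatest_nat[of "orthogonal_eigenset V T X" "{}" card] by blast
  have "X \<subseteq> fun_vs.span E"
  proof
    fix x assume "x \<in> X"
    show "x \<in> fun_vs.span E"
    proof (rule ccontr)
      assume "x \<notin> fun_vs.span E"
      then obtain z where "z \<notin> E" "orthogonal_eigenset V T X (insert z E)"
        using orthogonal_eigenset_insert[OF X E \<open>x \<in> X\<close>] by blast
      then show False
        using max[of "insert z E"] E by (simp add: orthogonal_eigenset_def)
    qed
  qed
  with E show ?thesis by blast
qed

lemma card_orthogonal_eigenset_eq_dim:
  assumes "invariant_subspace V T X" "orthogonal_eigenset V T X E" "X \<subseteq> fun_vs.span E"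
  shows "card E = fun_vs.dim X"
  using assms
  by (intro fun_vs.basis_card_eq_dim orthogonal_set_independent[OF finite_V])
    (auto simp: orthogonal_eigenset_def invariant_subspace_def)

lemma orthogonal_eigenbasis_split:
  assumes X: "invariant_subspace V T X"
  shows "\<exists>G D. orthogonal_eigenset V T X G \<and> X \<subseteq> fun_vs.span G
    \<and> D \<subseteq> orthogonal_complement V X
    \<and> orthogonal_eigenset V T (supported_on V) (G \<union> D) \<and> supported_on V \<subseteq> fun_vs.span (G \<union> D)"
proof -
  obtain G where G: "orthogonal_eigenset V T X G" "X \<subseteq> fun_vs.span G"
    using orthogonal_eigenbasis_exists[OF X] by blast
  obtain D where D: "orthogonal_eigenset V T (orthogonal_complement V X) D"
    "orthogonal_complement V X \<subseteq> fun_vs.span D"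
    using orthogonal_eigenbasis_exists[OF orthogonal_complement_invariant[OF X]] by blast
  have GV: "G \<subseteq> supported_on V" and DV: "D \<subseteq> supported_on V"
    using G(1) D(1) X by (auto simp: orthogonal_eigenset_def invariant_subspace_def orthogonal_complement_def)
  have "orthogonal_set V (G \<union> D)"
    using G(1) D(1) by (intro orthogonal_set_Un) (auto simp: orthogonal_eigenset_def orthogonal_complement_def)
  then have "orthogonal_eigenset V T (supported_on V) (G \<union> D)"
    using G(1) D(1) GV DV by (auto simp: orthogonal_eigenset_def)
  moreover have "supported_on V \<subseteq> fun_vs.span (G \<union> D)"
    using G D(2) GV by (intro supported_on_subset_span_Un[OF finite_V]) (auto simp: orthogonal_eigenset_def)
  ultimately show ?thesis
    using G D(1) by (intro exI[of _ G] exI[of _ D]) (auto simp: orthogonal_eigenset_def)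
qed

end

section \<open>The augmented Laplacian of the cube is Hermitian\<close>

lemma vfuns_eq_supported_on: "vfuns N = supported_on (cube_vertices N)"
  by (simp add: vfuns_def supported_on_def)

lemma cinner_eq_fun_inner: "cinner N = fun_inner (cube_vertices N)"
  by (simp add: fun_eq_iff cinner_def fun_inner_def)

lemma finite_cube_vertices [simp]: "finite (cube_vertices N)"
  by (simp add: cube_vertices_def)

lemma empty_in_cube_vertices [simp]: "{} \<in> cube_vertices N"
  and full_in_cube_vertices [simp]: "{..<N} \<in> cube_vertices N"
  by (simp_all add: cube_vertices_def)

lemma finite_if_in_cube_vertices: "v \<in> cube_vertices N \<Longrightarrow> finite v"
  by (auto simp: cube_vertices_def intro: finite_subset)

lemma empty_neq_full: "N \<ge> 1 \<Longrightarrow> {} \<noteq> {..<N::nat}"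
  using lessThan_empty_iff[of N] by auto

definition cube_flip :: "nat \<Rightarrow> nat set \<Rightarrow> nat set" where
  "cube_flip i v = v - {i} \<union> ({i} - v)"

lemma cube_flip_cube_flip [simp]: "cube_flip i (cube_flip i v) = v"
  by (auto simp: cube_flip_def)

lemma cube_flip_in_cube_vertices: "v \<in> cube_vertices N \<Longrightarrow> i < N \<Longrightarrow> cube_flip i v \<in> cube_vertices N"
  by (auto simp: cube_flip_def cube_vertices_def)

lemma cube_laplacian_eq:
  "cube_laplacian N f v = (if v \<in> cube_vertices N then (\<Sum>i<N. f v - f (cube_flip i v)) else 0)"
  by (simp add: cube_laplacian_def cube_flip_def)

lemma sum_involution_adjoint:
  assumes "\<sigma> ` V \<subseteq> V" "\<And>v. v \<in> V \<Longrightarrow> \<sigma> (\<sigma> v) = v"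
  shows "(\<Sum>v\<in>V. (f v - f (\<sigma> v)) * cnj (g v)) = (\<Sum>v\<in>V. f v * cnj (g v - g (\<sigma> v)))"
proof -
  have "(\<Sum>v\<in>V. f (\<sigma> v) * cnj (g v)) = (\<Sum>v\<in>V. f v * cnj (g (\<sigma> v)))"
    using assms by (intro sum.reindex_bij_witness[of _ \<sigma> \<sigma>]) auto
  then show ?thesis
    by (simp add: algebra_simps sum_subtractf)
qed

lemma cube_laplacian_hermitian: "cinner N (cube_laplacian N f) g = cinner N f (cube_laplacian N g)"
proof -
  have "cinner N (cube_laplacian N f) g
      = (\<Sum>i<N. \<Sum>v\<in>cube_vertices N. (f v - f (cube_flip i v)) * cnj (g v))"
    by (simp add: cinner_def cube_laplacian_eq sum_distrib_right) (rule sum.swap)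
  also have "\<dots> = (\<Sum>i<N. \<Sum>v\<in>cube_vertices N. f v * cnj (g v - g (cube_flip i v)))"
    by (intro sum.cong refl sum_involution_adjoint) (auto intro: cube_flip_in_cube_vertices)
  also have "\<dots> = cinner N f (cube_laplacian N g)"
    by (simp add: cinner_def cube_laplacian_eq sum_distrib_left) (rule sum.swap)
  finally show ?thesis .
qed

lemma cinner_corner_op_left:
  assumes "N \<ge> 1"
  shows "cinner N (corner_op N \<alpha> f) g
    = (f {} - f {..<N} / \<alpha>) * cnj (g {}) + (f {..<N} - \<alpha> * f {}) * cnj (g {..<N})"
proof -
  have "corner_op N \<alpha> f v * cnj (g v)
      = (if v = {} then (f {} - f {..<N} / \<alpha>) * cnj (g {}) else 0)
        + (if v = {..<N} then (f {..<N} - \<alpha> * f {}) * cnj (g {..<N}) else 0)" for v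
    using empty_neq_full[OF assms] by (auto simp: corner_op_def)
  then show ?thesis
    by (simp add: cinner_def sum.distrib)
qed

lemma corner_op_hermitian:
  assumes "N \<ge> 1" "cmod \<alpha> = 1"
  shows "cinner N (corner_op N \<alpha> f) g = cinner N f (corner_op N \<alpha> g)"
proof -
  have "\<alpha> \<noteq> 0"
    using assms(2) by auto
  moreover have "\<alpha> * cnj \<alpha> = 1"
    using assms(2) by (simp add: complex_norm_square[symmetric])
  ultimately have cnj_\<alpha>: "cnj \<alpha> = 1 / \<alpha>"
    by (simp add: field_simps)
  have "cinner N f (corner_op N \<alpha> g) = cnj (cinner N (corner_op N \<alpha> g) f)"
    by (simp add: cinner_eq_fun_inner fun_inner_commute[of _ f])
  also have "\<dots> = (f {} - f {..<N} / \<alpha>) * cnj (g {}) + (f {..<N} - \<alpha> * f {}) * cnj (g {..<N})"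
    unfolding cinner_corner_op_left[OF assms(1)] complex_cnj_add complex_cnj_diff complex_cnj_mult
      complex_cnj_divide complex_cnj_cnj cnj_\<alpha>
    using \<open>\<alpha> \<noteq> 0\<close> by (simp add: field_simps)
  finally show ?thesis
    by (simp add: cinner_corner_op_left[OF assms(1)])
qed

lemma cube_laplacian_add: "cube_laplacian N (f + g) = cube_laplacian N f + cube_laplacian N g"
proof
  fix v
  have "(\<Sum>i<N. (f + g) v - (f + g) (cube_flip i v))
      = (\<Sum>i<N. (f v - f (cube_flip i v)) + (g v - g (cube_flip i v)))"
    by (rule sum.cong) auto
  then show "cube_laplacian N (f + g) v = (cube_laplacian N f + cube_laplacian N g) v"
    by (simp add: cube_laplacian_eq sum.distrib)
qed

lemma cube_laplacian_scale: "cube_laplacian N (\<lambda>v. c * f v) = (\<lambda>v. c * cube_laplacian N f v)"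
proof
  fix v
  have "(\<Sum>i<N. c * f v - c * f (cube_flip i v)) = (\<Sum>i<N. c * (f v - f (cube_flip i v)))"
    by (rule sum.cong) (auto simp: algebra_simps)
  then show "cube_laplacian N (\<lambda>v. c * f v) v = c * cube_laplacian N f v"
    by (simp add: cube_laplacian_eq sum_distrib_left)
qed

lemma corner_op_add: "corner_op N \<alpha> (f + g) = corner_op N \<alpha> f + corner_op N \<alpha> g"
  by (simp add: fun_eq_iff corner_op_def add_divide_distrib ring_distribs)

lemma aug_laplacian_eq_add: "aug_laplacian N \<alpha> f = cube_laplacian N f + corner_op N \<alpha> f"
  by (simp add: fun_eq_iff aug_laplacian_def)

lemma aug_laplacian_hermitian:
  assumes "N \<ge> 1" "cmod \<alpha> = 1"
  shows "hermitian_operator (cube_vertices N) (aug_laplacian N \<alpha>)"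
proof
  fix f g :: "nat set \<Rightarrow> complex" and c :: complex
  show "aug_laplacian N \<alpha> (f + g) = aug_laplacian N \<alpha> f + aug_laplacian N \<alpha> g"
    by (simp add: aug_laplacian_eq_add cube_laplacian_add corner_op_add)
  show "aug_laplacian N \<alpha> (\<lambda>v. c * f v) = (\<lambda>v. c * aug_laplacian N \<alpha> f v)"
    by (auto simp: fun_eq_iff aug_laplacian_def cube_laplacian_scale corner_op_def algebra_simps)
  show "fun_inner (cube_vertices N) (aug_laplacian N \<alpha> f) g
      = fun_inner (cube_vertices N) f (aug_laplacian N \<alpha> g)"
    using cube_laplacian_hermitian[of N f g] corner_op_hermitian[OF assms, of f g]
    by (simp add: aug_laplacian_eq_add fun_inner_add_left fun_inner_add_right cinner_eq_fun_inner)
  show "aug_laplacian N \<alpha> f \<in> supported_on (cube_vertices N)"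
    by (auto simp: supported_on_def aug_laplacian_def cube_laplacian_def corner_op_def)
qed simp

section \<open>Characters of the cube\<close>

lemma sign_card_cube_flip:
  assumes "finite v"
  shows "(-1::complex) ^ card (cube_flip i v \<inter> \<gamma>) = (if i \<in> \<gamma> then -1 else 1) * (-1) ^ card (v \<inter> \<gamma>)"
proof (cases "i \<in> \<gamma>")
  case True
  have "finite (cube_flip i v)"
    using assms by (simp add: cube_flip_def)
  consider
      "i \<notin> v" "cube_flip i v \<inter> \<gamma> = insert i (v \<inter> \<gamma>)"
    | "i \<notin> cube_flip i v" "v \<inter> \<gamma> = insert i (cube_flip i v \<inter> \<gamma>)"
    using True by (auto simp: cube_flip_def)
  then show ?thesis
    using True assms \<open>finite (cube_flip i v)\<close> by cases simp_all
next
  case False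
  then have "cube_flip i v \<inter> \<gamma> = v \<inter> \<gamma>"
    by (auto simp: cube_flip_def)
  with False show ?thesis
    by simp
qed

lemma cube_laplacian_hgamma:
  assumes "\<gamma> \<subseteq> {..<N}"
  shows "cube_laplacian N (hgamma N \<gamma>) = (\<lambda>v. 2 * of_nat (card \<gamma>) * hgamma N \<gamma> v)"
proof
  fix v
  show "cube_laplacian N (hgamma N \<gamma>) v = 2 * of_nat (card \<gamma>) * hgamma N \<gamma> v"
  proof (cases "v \<in> cube_vertices N")
    case True
    have "(\<Sum>i<N. hgamma N \<gamma> v - hgamma N \<gamma> (cube_flip i v))
        = (\<Sum>i<N. if i \<in> \<gamma> then 2 * hgamma N \<gamma> v else 0)"
      using True finite_if_in_cube_vertices[OF True]
      by (intro sum.cong) (auto simp: hgamma_def cube_flip_in_cube_vertices sign_card_cube_flip)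
    also have "\<dots> = 2 * of_nat (card \<gamma>) * hgamma N \<gamma> v"
      using assms by (simp add: sum.If_cases Int_absorb1)
    finally show ?thesis
      using True by (simp add: cube_laplacian_eq)
  qed (simp add: cube_laplacian_eq hgamma_def)
qed

lemma cube_laplacian_sum:
  "cube_laplacian N (\<lambda>v. \<Sum>\<gamma>\<in>G. F \<gamma> v) = (\<lambda>v. \<Sum>\<gamma>\<in>G. cube_laplacian N (F \<gamma>) v)"
  by (simp add: fun_eq_iff cube_laplacian_eq sum_subtractf[symmetric] sum.swap[of _ G] sum.If_cases)

lemma hsum_eq: "hsum N k = (\<lambda>v. \<Sum>\<gamma>\<in>{\<gamma>\<in>cube_vertices N. card \<gamma> = k}. hgamma N \<gamma> v)"
  by (simp add: fun_eq_iff hsum_def)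

lemma cube_laplacian_hsum: "cube_laplacian N (hsum N k) = (\<lambda>v. 2 * of_nat k * hsum N k v)"
  unfolding hsum_eq cube_laplacian_sum
  by (simp add: cube_laplacian_hgamma cube_vertices_def sum_distrib_left)

lemma hsum_in_vfuns: "hsum N k \<in> vfuns N"
  by (simp add: vfuns_def hsum_def hgamma_def)

lemma hsum_empty_nonzero:
  assumes "k \<le> N"
  shows "hsum N k {} \<noteq> 0"
proof -
  have "{..<k} \<in> {\<gamma>\<in>cube_vertices N. card \<gamma> = k}"
    using assms by (auto simp: cube_vertices_def)
  then have "card {\<gamma>\<in>cube_vertices N. card \<gamma> = k} \<noteq> 0"
    by (auto simp: card_eq_0_iff)
  then show ?thesis
    by (simp add: hsum_def hgamma_def)
qed

lemma hsum_orthogonal: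
  assumes "k \<noteq> l"
  shows "cinner N (hsum N k) (hsum N l) = 0"
proof -
  have "2 * of_nat k * cinner N (hsum N k) (hsum N l) = 2 * of_nat l * cinner N (hsum N k) (hsum N l)"
    using cube_laplacian_hermitian[of N "hsum N k" "hsum N l"]
    by (simp add: cube_laplacian_hsum cinner_eq_fun_inner fun_inner_scale_left fun_inner_scale_right)
  with assms show ?thesis
    by simp
qed

lemma sign_card_Int_eq_prod:
  "finite \<gamma> \<Longrightarrow> (-1::complex) ^ card (v \<inter> \<gamma>) = (\<Prod>x\<in>\<gamma>. if x \<in> v then -1 else 1)"
  by (simp add: prod.If_cases Int_commute)

lemma sum_sign_card_Int:
  assumes "finite A"
  shows "(\<Sum>\<gamma>\<in>Pow A. (-1::complex) ^ card (v \<inter> \<gamma>) * (-1) ^ card (w \<inter> \<gamma>))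
    = (if v \<inter> A = w \<inter> A then 2 ^ card A else 0)"
proof -
  define s where "s x = (if x \<in> v then -1 else 1) * (if x \<in> w then -1 else (1::complex))" for x
  have "(-1::complex) ^ card (v \<inter> \<gamma>) * (-1) ^ card (w \<inter> \<gamma>) = (\<Prod>x\<in>\<gamma>. s x) * (\<Prod>x\<in>A - \<gamma>. 1)"
    if "\<gamma> \<in> Pow A" for \<gamma>
    using finite_subset[of \<gamma> A] that assms by (simp add: sign_card_Int_eq_prod s_def prod.distrib)
  then have "(\<Sum>\<gamma>\<in>Pow A. (-1::complex) ^ card (v \<inter> \<gamma>) * (-1) ^ card (w \<inter> \<gamma>)) = (\<Prod>x\<in>A. s x + 1)"
    using prod_add[OF assms, of s "\<lambda>_. 1"] by simp
  also have "\<dots> = (if v \<inter> A = w \<inter> A then 2 ^ card A else 0)"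
  proof (cases "v \<inter> A = w \<inter> A")
    case True
    then have "s x + 1 = 2" if "x \<in> A" for x
      using that by (auto simp: s_def)
    with True show ?thesis
      by simp
  next
    case False
    then obtain x where "x \<in> A" "(x \<in> v) \<noteq> (x \<in> w)"
      by blast
    then have "x \<in> A" "s x + 1 = 0"
      by (auto simp: s_def)
    with False assms show ?thesis
      by (auto simp: prod_zero_iff)
  qed
  finally show ?thesis .
qed

lemma hgamma_completeness:
  assumes "w \<in> cube_vertices N"
  shows "(\<Sum>\<gamma>\<in>cube_vertices N. cnj (hgamma N \<gamma> w) * hgamma N \<gamma> v) = (if v = w then 1 else 0)"
proof (cases "v \<in> cube_vertices N")
  case True
  define c where "c = 2 powr (- real N / 2)"
  have v: "v \<inter> {..<N} = v" and w: "w \<inter> {..<N} = w"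
    using True assms by (auto simp: cube_vertices_def)
  have "(\<Sum>\<gamma>\<in>cube_vertices N. cnj (hgamma N \<gamma> w) * hgamma N \<gamma> v)
      = of_real (c\<^sup>2) * (\<Sum>\<gamma>\<in>Pow {..<N}. (-1) ^ card (v \<inter> \<gamma>) * (-1) ^ card (w \<inter> \<gamma>))"
    using True assms
    by (simp add: hgamma_def c_def cube_vertices_def sum_distrib_left power2_eq_square algebra_simps)
  also have "\<dots> = (if v = w then of_real (c\<^sup>2 * 2 ^ N) else 0)"
    using sum_sign_card_Int[of "{..<N}" v w] v w by simp
  also have "c\<^sup>2 * 2 ^ N = 1"
    by (simp add: c_def powr_powr [symmetric] powr_realpow [symmetric] powr_add [symmetric] power2_eq_square)
  finally show ?thesis
    by simp
qed (use assms in \<open>auto simp: hgamma_def\<close>)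

lemma sum_hgamma_by_card:
  "(\<Sum>\<gamma>\<in>cube_vertices N. F (card \<gamma>) * hgamma N \<gamma> v) = (\<Sum>k\<le>N. F k * hsum N k v)"
proof -
  have "card \<gamma> \<le> N" if "\<gamma> \<in> cube_vertices N" for \<gamma>
    using that card_mono[of "{..<N}" \<gamma>] by (auto simp: cube_vertices_def)
  then have "(\<Sum>\<gamma>\<in>cube_vertices N. F (card \<gamma>) * hgamma N \<gamma> v)
      = (\<Sum>k\<le>N. \<Sum>\<gamma>\<in>{\<gamma>\<in>cube_vertices N. card \<gamma> = k}. F (card \<gamma>) * hgamma N \<gamma> v)"
    by (intro sum.group[symmetric]) auto
  then show ?thesis
    by (simp add: hsum_def sum_distrib_left)
qed

lemma indicator_corner_in_span_hsum:
  assumes "w = {} \<or> w = {..<N}"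
  shows "(\<lambda>v. if v = w then 1 else 0) \<in> fun_vs.span (hsum N ` {..N})"
proof -
  \<comment> \<open>for these two vertices \<open>(-1) ^ card (w \<inter> \<gamma>)\<close> depends on \<open>\<gamma>\<close> only through \<open>card \<gamma>\<close>\<close>
  define F :: "nat \<Rightarrow> complex" where
    "F k = of_real (2 powr (- real N / 2)) * (if w = {} then 1 else (-1) ^ k)" for k
  have "cnj (hgamma N \<gamma> w) = F (card \<gamma>)" if "\<gamma> \<in> cube_vertices N" for \<gamma>
    using assms that by (auto simp: hgamma_def F_def cube_vertices_def Int_absorb1)
  moreover have "w \<in> cube_vertices N"
    using assms by auto
  ultimately have "(\<lambda>v. if v = w then 1 else 0) = (\<lambda>v. \<Sum>\<gamma>\<in>cube_vertices N. F (card \<gamma>) * hgamma N \<gamma> v)"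
    by (simp add: hgamma_completeness[symmetric])
  also have "\<dots> = (\<Sum>k\<le>N. (\<lambda>v. F k * hsum N k v))"
    by (simp add: fun_eq_iff sum_fun_apply sum_hgamma_by_card)
  also have "\<dots> \<in> fun_vs.span (hsum N ` {..N})"
    by (intro fun_vs.span_sum fun_vs.span_scale fun_vs.span_base) auto
  finally show ?thesis .
qed

lemma corner_op_in_span_hsum:
  assumes "N \<ge> 1"
  shows "corner_op N \<alpha> f \<in> fun_vs.span (hsum N ` {..N})"
proof -
  have "corner_op N \<alpha> f = (\<lambda>v. (f {} - f {..<N} / \<alpha>) * (if v = {} then 1 else 0))
      + (\<lambda>v. (f {..<N} - \<alpha> * f {}) * (if v = {..<N} then 1 else 0))"
    using empty_neq_full[OF assms] by (auto simp: fun_eq_iff corner_op_def)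
  then show ?thesis
    using indicator_corner_in_span_hsum[of "{}" N] indicator_corner_in_span_hsum[of "{..<N}" N]
    by (auto intro: fun_vs.span_add fun_vs.span_scale)
qed

lemma span_hsum_invariant:
  assumes "N \<ge> 1" "cmod \<alpha> = 1"
  shows "invariant_subspace (cube_vertices N) (aug_laplacian N \<alpha>) (fun_vs.span (hsum N ` {..N}))"
proof -
  interpret hermitian_operator "cube_vertices N" "aug_laplacian N \<alpha>"
    using assms by (rule aug_laplacian_hermitian)
  show ?thesis
  proof (rule invariant_subspace_span)
    show "hsum N ` {..N} \<subseteq> supported_on (cube_vertices N)"
      using hsum_in_vfuns by (auto simp: vfuns_eq_supported_on)
  next
    fix h assume h: "h \<in> hsum N ` {..N}"
    then obtain k where "h = hsum N k"
      by blast
    then have "aug_laplacian N \<alpha> h = (\<lambda>v. (2 * of_nat k) * h v) + corner_op N \<alpha> h"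
      by (simp add: aug_laplacian_eq_add cube_laplacian_hsum)
    then show "aug_laplacian N \<alpha> h \<in> fun_vs.span (hsum N ` {..N})"
      using h corner_op_in_span_hsum[OF assms(1)]
      by (auto intro: fun_vs.span_add fun_vs.span_scale fun_vs.span_base)
  qed
qed

lemma hsum_orthogonal_set: "orthogonal_set (cube_vertices N) (hsum N ` {..N})"
  by (auto simp: orthogonal_set_def cinner_eq_fun_inner[symmetric] intro: hsum_orthogonal)

lemma hsum_nonzero: "k \<le> N \<Longrightarrow> hsum N k \<noteq> 0"
  using hsum_empty_nonzero by (metis zero_fun_apply)

lemma inj_on_hsum: "inj_on (hsum N) {..N}"
proof (rule inj_onI, rule ccontr)
  fix k l assume "k \<in> {..N}" "l \<in> {..N}" "hsum N k = hsum N l" "k \<noteq> l"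
  then show False
    using hsum_orthogonal[of k l N] hsum_nonzero[of k N] hsum_in_vfuns[of N k]
      fun_inner_self_nonzero[of "cube_vertices N" "hsum N k"]
    by (auto simp: cinner_eq_fun_inner vfuns_eq_supported_on)
qed

lemma independent_hsum: "fun_vs.independent (hsum N ` {..N})"
  using hsum_orthogonal_set hsum_nonzero hsum_in_vfuns
  by (intro orthogonal_set_independent[of "cube_vertices N"]) (auto simp: vfuns_eq_supported_on)

lemma dim_span_hsum: "fun_vs.dim (fun_vs.span (hsum N ` {..N})) = N + 1"
  using independent_hsum inj_on_hsum by (simp add: fun_vs.dim_eq_card_independent card_image)

lemma vnorm_nonzero:
  assumes "v \<in> cube_vertices N" "f v \<noteq> 0"
  shows "vnorm N f \<noteq> 0"
proof -
  have "0 < (cmod (f v))\<^sup>2"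
    using assms(2) by simp
  also have "\<dots> \<le> (\<Sum>w\<in>cube_vertices N. (cmod (f w))\<^sup>2)"
    using assms(1) by (intro member_le_sum) auto
  finally show ?thesis
    by (simp add: vnorm_def)
qed

lemma span_hsum_subset_hnk_sums:
  "fun_vs.span (hsum N ` {..N}) \<subseteq> {h. \<exists>c. h = (\<lambda>v. \<Sum>\<kappa>\<le>N. c \<kappa> * hnk N \<kappa> v)}"
proof (rule fun_vs.span_minimal)
  show "fun_vs.subspace {h. \<exists>c. h = (\<lambda>v. \<Sum>\<kappa>\<le>N. c \<kappa> * hnk N \<kappa> v)}"
    unfolding fun_vs.subspace_def
  proof (intro conjI ballI allI)
    show "0 \<in> {h. \<exists>c. h = (\<lambda>v. \<Sum>\<kappa>\<le>N. c \<kappa> * hnk N \<kappa> v)}"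
      by (auto simp: fun_eq_iff intro: exI[of _ "\<lambda>_. 0"])
    fix x y a assume "x \<in> {h. \<exists>c. h = (\<lambda>v. \<Sum>\<kappa>\<le>N. c \<kappa> * hnk N \<kappa> v)}"
      "y \<in> {h. \<exists>c. h = (\<lambda>v. \<Sum>\<kappa>\<le>N. c \<kappa> * hnk N \<kappa> v)}"
    then obtain c d where "x = (\<lambda>v. \<Sum>\<kappa>\<le>N. c \<kappa> * hnk N \<kappa> v)" "y = (\<lambda>v. \<Sum>\<kappa>\<le>N. d \<kappa> * hnk N \<kappa> v)"
      by blast
    then show "x + y \<in> {h. \<exists>c. h = (\<lambda>v. \<Sum>\<kappa>\<le>N. c \<kappa> * hnk N \<kappa> v)}"
      by (auto simp: fun_eq_iff sum.distrib algebra_simps intro!: exI[of _ "\<lambda>\<kappa>. c \<kappa> + d \<kappa>"])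
    show "(\<lambda>v. a * x v) \<in> {h. \<exists>c. h = (\<lambda>v. \<Sum>\<kappa>\<le>N. c \<kappa> * hnk N \<kappa> v)}"
      using \<open>x = _\<close> by (auto simp: fun_eq_iff sum_distrib_left mult.assoc intro!: exI[of _ "\<lambda>\<kappa>. a * c \<kappa>"])
  qed
  show "hsum N ` {..N} \<subseteq> {h. \<exists>c. h = (\<lambda>v. \<Sum>\<kappa>\<le>N. c \<kappa> * hnk N \<kappa> v)}"
  proof
    fix h assume "h \<in> hsum N ` {..N}"
    then obtain k where k: "k \<le> N" "h = hsum N k"
      by blast
    then have "vnorm N h \<noteq> 0"
      using hsum_empty_nonzero by (intro vnorm_nonzero[of "{}"]) auto
    define c :: "nat \<Rightarrow> complex" where "c \<kappa> = (if \<kappa> = k then of_real (vnorm N h) else 0)" for \<kappa>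
    have "h = (\<lambda>v. of_real (vnorm N h) * hnk N k v)"
      using \<open>vnorm N h \<noteq> 0\<close> by (simp add: fun_eq_iff hnk_def k(2))
    also have "\<dots> = (\<lambda>v. \<Sum>\<kappa>\<le>N. c \<kappa> * hnk N \<kappa> v)"
      using k(1) by (simp add: c_def if_distrib[of "\<lambda>x. x * _"] cong: if_cong)
    finally show "h \<in> {h. \<exists>c. h = (\<lambda>v. \<Sum>\<kappa>\<le>N. c \<kappa> * hnk N \<kappa> v)}"
      by blast
  qed
qed

lemma dirichlet_eigvec_if_orthogonal_span_hsum:
  assumes "h \<in> orthogonal_complement (cube_vertices N) (fun_vs.span (hsum N ` {..N}))"
    and "is_eigvec N (aug_laplacian N \<alpha>) h \<mu>"
  shows "dirichlet_eigvec N h \<mu>"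
proof -
  have "h w = 0" if "w = {} \<or> w = {..<N}" for w
    using assms(1) indicator_corner_in_span_hsum[OF that] that
      fun_inner_indicator_right[of "cube_vertices N" w h]
    by (auto simp: orthogonal_complement_def)
  moreover from this have "aug_laplacian N \<alpha> h = cube_laplacian N h"
    by (simp add: fun_eq_iff aug_laplacian_def corner_op_def)
  ultimately show ?thesis
    using assms(2) by (simp add: dirichlet_eigvec_def is_eigvec_def)
qed

lemma vfuns_basis_if_orthogonal_eigenbasis:
  assumes B: "orthogonal_eigenset (cube_vertices N) T (vfuns N) B" "vfuns N \<subseteq> fun_vs.span B"
  shows "finite B \<and> B \<subseteq> vfuns N \<and> lin_indep N B \<and> spans N B \<and> (\<forall>h\<in>B. \<exists>\<mu>. is_eigvec N T h \<mu>)"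
proof (intro conjI ballI)
  show "finite B" "B \<subseteq> vfuns N"
    using B(1) by (auto simp: orthogonal_eigenset_def)
  moreover have "fun_vs.independent B"
    using B(1) by (intro orthogonal_set_independent[of "cube_vertices N"])
      (auto simp: orthogonal_eigenset_def vfuns_eq_supported_on)
  ultimately show "lin_indep N B" "spans N B"
    using B(2) by (auto simp: lin_indep_def fun_vs.dependent_finite fun_eq_iff sum_fun_apply
        spans_def in_span_finite_iff)
  show "\<exists>\<mu>. is_eigvec N T h \<mu>" if "h \<in> B" for h
    using B(1) that by (auto simp: orthogonal_eigenset_def is_eigvec_def zero_fun_def)
qed

theorem lemma4:
  fixes N :: nat and \<alpha> :: complex
  assumes "N \<ge> 1" and "cmod \<alpha> = 1"
  shows "\<exists>B. finite B \<and> B \<subseteq> vfuns N \<and> lin_indep N B \<and> spans N B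
           \<and> (\<forall>h\<in>B. \<exists>mu. is_eigvec N (aug_laplacian N \<alpha>) h mu
                  \<and> (dirichlet_eigvec N h mu
                     \<or> (\<exists>c. h = (\<lambda>v. \<Sum>\<kappa>\<le>N. c \<kappa> * hnk N \<kappa> v))))
           \<and> (\<exists>S\<subseteq>B. card S = N + 1
                  \<and> (\<forall>h\<in>S. \<exists>c. h = (\<lambda>v. \<Sum>\<kappa>\<le>N. c \<kappa> * hnk N \<kappa> v))
                  \<and> (\<forall>g\<in>S. \<forall>h\<in>S. g \<noteq> h \<longrightarrow> cinner N g h = 0))"
proof -
  interpret hermitian_operator "cube_vertices N" "aug_laplacian N \<alpha>"
    using assms by (rule aug_laplacian_hermitian)
  let ?H = "fun_vs.span (hsum N ` {..N})"
  obtain G D where G: "orthogonal_eigenset (cube_vertices N) (aug_laplacian N \<alpha>) ?H G" "?H \<subseteq> fun_vs.span G"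
    and D: "D \<subseteq> orthogonal_complement (cube_vertices N) ?H"
    and B: "orthogonal_eigenset (cube_vertices N) (aug_laplacian N \<alpha>) (vfuns N) (G \<union> D)"
      "vfuns N \<subseteq> fun_vs.span (G \<union> D)"
    using orthogonal_eigenbasis_split[OF span_hsum_invariant[OF assms]] by (auto simp: vfuns_eq_supported_on)
  have card_G: "card G = N + 1"
    using card_orthogonal_eigenset_eq_dim[OF span_hsum_invariant[OF assms] G] dim_span_hsum by simp
  have basis: "finite (G \<union> D) \<and> G \<union> D \<subseteq> vfuns N \<and> lin_indep N (G \<union> D) \<and> spans N (G \<union> D)
      \<and> (\<forall>h\<in>G \<union> D. \<exists>\<mu>. is_eigvec N (aug_laplacian N \<alpha>) h \<mu>)"
    using B by (rule vfuns_basis_if_orthogonal_eigenbasis)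
  have type_ii: "\<exists>c. h = (\<lambda>v. \<Sum>\<kappa>\<le>N. c \<kappa> * hnk N \<kappa> v)" if "h \<in> G" for h
    using G(1) that span_hsum_subset_hnk_sums by (auto simp: orthogonal_eigenset_def)
  have type_i_or_ii: "\<exists>\<mu>. is_eigvec N (aug_laplacian N \<alpha>) h \<mu>
      \<and> (dirichlet_eigvec N h \<mu> \<or> (\<exists>c. h = (\<lambda>v. \<Sum>\<kappa>\<le>N. c \<kappa> * hnk N \<kappa> v)))" if "h \<in> G \<union> D" for h
    using basis that type_ii D dirichlet_eigvec_if_orthogonal_span_hsum by blast
  show ?thesis
  proof (rule exI[of _ "G \<union> D"], intro conjI exI[of _ G])
  qed (use basis card_G type_i_or_ii type_ii G(1) in
      \<open>auto simp: orthogonal_eigenset_def orthogonal_set_def cinner_eq_fun_inner\<close>)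
qed

end
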